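(* Let $k\in\mathbb N$, $R\ge 1$, let $W(k,R)=B^{\omega_k}_R(e)\cap\mathcal B^{\mathbb C}_{TM}$, and let $N\in\mathbb N$ satisfy $8R<2^{N-k}$. Then for all $a,b\in W(k,R)$ the elements $a\cdot b$ and $a^{-1}$ lie in $\mathbb C^{\mathcal T_0}(\omega_N)$, and the maps $$\mu^R_k\colon W(k,R)\times W(k,R)\to\mathbb C^{\mathcal T_0}(\omega_N),\ (a,b)\mapsto a\cdot b,\qquad \iota^R_k\colon W(k,R)\to\mathbb C^{\mathcal T_0}(\omega_N),\ a\mapsto a^{-1}$$ are continuous, where $W(k,R)$ carries the topology of the norm $\|\cdot\|_{\omega_k}$ and the target the topology of $\|\cdot\|_{\omega_N}$.
   Context: $\mathcal T$ is the set of rooted trees (finite, at least one vertex, up to root-preserving isomorphism), $\mathcal T_0=\mathcal T\cup\{\emptyset\}$, $|\tau|$ the number of vertices. Ordered subtrees $\mathrm{OST}(\tau)$: subsets $s$ of the vertices of $\tau$ connected by edges of $\tau$ and containing the root if nonempty; $s_\tau$ the induced rooted tree; $\tau\setminus s$ the forest left after deleting $s$ and adjacent edges. Partitions $\mathcal P(\tau)$: subsets $p$ of edges; $\tau\setminus p$ the forest left after deleting these edges; $\#(\tau\setminus p)$ its number of trees. For a forest $\mathcal F$, $a(\mathcal F)=\prod_{\theta\in\mathcal F}a(\theta)$. The complex Butcher group $G^{\mathbb C}_{TM}=\{a\colon\mathcal T_0\to\mathbb C\mid a(\emptyset)=1\}$ has product $(a\cdot b)(\tau)=\sum_{s\in\mathrm{OST}(\tau)}b(s_\tau)a(\tau\setminus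 s)$, inverse $a^{-1}(\tau)=\sum_{p\in\mathcal P(\tau)}(-1)^{\#(\tau\setminus p)}a(\tau\setminus p)$ and unit $e$ ($e(\emptyset)=1$, else $0$). $\mathcal B^{\mathbb C}_{TM}=\{a\in G^{\mathbb C}_{TM}\mid\exists C,K>0\ \forall\tau\in\mathcal T:\ |a(\tau)|\le CK^{|\tau|}\}$. For $k\in\mathbb N$, $\omega_k(\tau)=2^{-k|\tau|}$, $\mathbb C^{\mathcal T_0}(\omega_k)=\{a\colon\mathcal T_0\to\mathbb C\mid\|a\|_{\omega_k}:=\sup_\tau|a(\tau)|\omega_k(\tau)<\infty\}$, and $B^{\omega_k}_R(x)$ is the open ball of radius $R$ about $x$ in this Banach space. *)

theory Defs
  imports Complex_Main "HOL-Library.Multiset"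
begin

text \<open>Rooted trees up to root-preserving isomorphism: a root together with the
  multiset of its subtrees.\<close>
datatype rtree = Node "rtree multiset"

text \<open>Concrete (planar) representatives. The vertices of a planar tree are its
  positions: lists of child indices from the root.\<close>
datatype ptree = PN "ptree list"

fun abst :: "ptree \<Rightarrow> rtree" where
  "abst (PN ts) = Node (mset (map abst ts))"

definition rep :: "rtree \<Rightarrow> ptree" where
  "rep \<tau> = (SOME t. abst t = \<tau>)"

lemma size_nth_less: "i < length ts \<Longrightarrow> size (ts ! i) < Suc (size_list size ts)"
  using size_list_estimation'[OF nth_mem[of i ts] order_refl, of size] by simp

function pos :: "ptree \<Rightarrow> nat list set" where
  "pos (PN ts) = insert [] (\<Union>i\<in>{..<length ts}. Cons i ` pos (ts ! i))"
  by pat_completeness auto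
termination
  by (relation "measure size") (auto simp: size_nth_less)

fun sub :: "ptree \<Rightarrow> nat list \<Rightarrow> ptree" where
  "sub t [] = t"
| "sub (PN ts) (i # p) = sub (ts ! i) p"

text \<open>\<open>res S r t\<close>: the tree induced on the vertices of \<open>S\<close> that are reachable
  from the vertex \<open>r\<close> (whose subtree is \<open>t\<close>) via vertices of \<open>S\<close>.\<close>
function res :: "nat list set \<Rightarrow> nat list \<Rightarrow> ptree \<Rightarrow> ptree" where
  "res S r (PN ts) =
     PN (map (\<lambda>i. res S (r @ [i]) (ts ! i)) (filter (\<lambda>i. r @ [i] \<in> S) [0..<length ts]))"
  by pat_completeness auto
termination
  by (relation "measure (\<lambda>(S, r, t). size t)") (auto simp: size_nth_less)

definition nverts :: "rtree \<Rightarrow> nat" where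
  "nverts \<tau> = card (pos (rep \<tau>))"

definition nverts0 :: "rtree option \<Rightarrow> nat" where
  "nverts0 x = (case x of None \<Rightarrow> 0 | Some \<tau> \<Rightarrow> nverts \<tau>)"

text \<open>Ordered subtrees of \<open>\<tau>\<close> (as vertex sets of the representative): empty, or
  containing the root and connected, i.e. closed under taking parents.\<close>
definition OST :: "rtree \<Rightarrow> nat list set set" where
  "OST \<tau> = {s. s \<subseteq> pos (rep \<tau>) \<and>
       (s = {} \<or> ([] \<in> s \<and> (\<forall>q\<in>s. q \<noteq> [] \<longrightarrow> butlast q \<in> s)))}"

definition ost_tree :: "rtree \<Rightarrow> nat list set \<Rightarrow> rtree option" where
  "ost_tree \<tau> s = (if s = {} then None else Some (abst (res s [] (rep \<tau>))))"

text \<open>\<open>\<tau> \ s\<close>: the forest of the remaining vertices; its trees are rooted at the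
  vertices not in \<open>s\<close> whose parent lies in \<open>s\<close> (or at the root if \<open>s = {}\<close>).\<close>
definition ost_forest :: "rtree \<Rightarrow> nat list set \<Rightarrow> rtree multiset" where
  "ost_forest \<tau> s =
     image_mset (\<lambda>q. abst (res (pos (rep \<tau>) - s) q (sub (rep \<tau>) q)))
       (mset_set {q \<in> pos (rep \<tau>) - s. q = [] \<or> butlast q \<in> s})"

text \<open>Edges of \<open>\<tau>\<close>, each identified with its lower endpoint (a non-root vertex).
  Partitions are sets of edges.\<close>
definition edges :: "rtree \<Rightarrow> nat list set" where
  "edges \<tau> = pos (rep \<tau>) - {[]}"

definition partitions :: "rtree \<Rightarrow> nat list set set" where
  "partitions \<tau> = Pow (edges \<tau>)"

text \<open>\<open>\<tau> \ p\<close>: after deleting the edges \<open>p\<close>, the components are rooted at the root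
  and at the lower endpoints of the deleted edges.\<close>
definition part_forest :: "rtree \<Rightarrow> nat list set \<Rightarrow> rtree multiset" where
  "part_forest \<tau> p =
     image_mset (\<lambda>q. abst (res (pos (rep \<tau>) - p) q (sub (rep \<tau>) q)))
       (mset_set (insert [] p))"

definition forest_val :: "(rtree option \<Rightarrow> complex) \<Rightarrow> rtree multiset \<Rightarrow> complex" where
  "forest_val a F = prod_mset (image_mset (\<lambda>\<theta>. a (Some \<theta>)) F)"

definition GTM :: "(rtree option \<Rightarrow> complex) set" where
  "GTM = {a. a None = 1}"

definition bmult :: "(rtree option \<Rightarrow> complex) \<Rightarrow> (rtree option \<Rightarrow> complex) \<Rightarrow> rtree option \<Rightarrow> complex" where
  "bmult a b x = (case x of None \<Rightarrow> 1
     | Some \<tau> \<Rightarrow> (\<Sum>s\<in>OST \<tau>. b (ost_tree \<tau> s) * forest_val a (ost_forest \<tau> s)))"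

definition binv :: "(rtree option \<Rightarrow> complex) \<Rightarrow> rtree option \<Rightarrow> complex" where
  "binv a x = (case x of None \<Rightarrow> 1
     | Some \<tau> \<Rightarrow> (\<Sum>p\<in>partitions \<tau>. (-1) ^ size (part_forest \<tau> p) * forest_val a (part_forest \<tau> p)))"

definition bunit :: "rtree option \<Rightarrow> complex" where
  "bunit x = (if x = None then 1 else 0)"

definition BTM :: "(rtree option \<Rightarrow> complex) set" where
  "BTM = {a \<in> GTM. \<exists>C K. C > 0 \<and> K > 0 \<and> (\<forall>\<tau>. cmod (a (Some \<tau>)) \<le> C * K ^ nverts \<tau>)}"

definition omega :: "nat \<Rightarrow> rtree option \<Rightarrow> real" where
  "omega k x = (1/2) ^ (k * nverts0 x)"

definition Cw :: "nat \<Rightarrow> (rtree option \<Rightarrow> complex) set" where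
  "Cw k = {a. bdd_above (range (\<lambda>x. cmod (a x) * omega k x))}"

definition wnorm :: "nat \<Rightarrow> (rtree option \<Rightarrow> complex) \<Rightarrow> real" where
  "wnorm k a = (SUP x. cmod (a x) * omega k x)"

definition wball :: "nat \<Rightarrow> real \<Rightarrow> (rtree option \<Rightarrow> complex) \<Rightarrow> (rtree option \<Rightarrow> complex) set" where
  "wball k R c = {a \<in> Cw k. wnorm k (\<lambda>x. a x - c x) < R}"

definition W :: "nat \<Rightarrow> real \<Rightarrow> (rtree option \<Rightarrow> complex) set" where
  "W k R = wball k R bunit \<inter> BTM"

end

(*
  Each coefficient (a \<cdot> b)(\<tau>) is a sum over at most 2^|\<tau>| ordered subtrees s of products
  b(s_\<tau>) a(\<theta>_1) \<cdots> a(\<theta>_m), in which the vertex counts of the factors add up to at most |\<tau>|;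
  similarly for a\<^sup>-\<^sup>1(\<tau>) with the edge partitions. Elements of W(k,R) satisfy
  |a(\<tau>)| \<le> R 2^(k|\<tau>|), and if two of them are at \<omega>_k-distance d, then |a(\<tau>) - a'(\<tau>)| \<le> d 2^(k|\<tau>|).
  Telescoping the products, a change of size d in the arguments changes the coefficient at \<tau>
  by at most 2^n (n+1) d R^(n+1) 2^(kn), n = |\<tau>|. After multiplication by \<omega>_N(\<tau>) = 2^(-Nn) this is
  d R (n+1) (2R/2^(N-k))^n \<le> d R (n+1) 4^(-n) \<le> d R, so both maps are Lipschitz with constant R
  into the \<omega>_N-weighted space; comparing with the zero function gives the membership claims.
*)
theory Submission
  imports Defs
begin

section \<open>Vertex counts of induced subtrees\<close>

text \<open>Counting vertices on \<open>rtree\<close> directly shows that \<open>card (pos t)\<close> does not depend on the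
  planar representative chosen by \<open>rep\<close>.\<close>
function nodes :: "rtree \<Rightarrow> nat" where
 "nodes (Node M) = Suc (\<Sum>\<^sub># (image_mset nodes M))"
  by pat_completeness auto
termination
  by (relation "measure size") (auto dest!: multi_member_split)

lemma finite_pos: "finite (pos t)"
  by (induction t rule: pos.induct) auto

lemma Nil_in_pos [simp]: "[] \<in> pos t"
  by (cases t) auto

lemma Cons_in_pos_iff: "(i # p \<in> pos (PN ts)) \<longleftrightarrow> i < length ts \<and> p \<in> pos (ts ! i)"
  by auto

lemma card_pos_PN: "card (pos (PN ts)) = Suc (\<Sum>i<length ts. card (pos (ts ! i)))"
proof -
  have "card (pos (PN ts)) = Suc (card (\<Union>i\<in>{..<length ts}. Cons i ` pos (ts ! i)))"
    by (subst pos.simps, rule card_insert_disjoint) (auto simp: finite_pos)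
  also have "card (\<Union>i\<in>{..<length ts}. Cons i ` pos (ts ! i)) = (\<Sum>i<length ts. card (Cons i ` pos (ts ! i)))"
    by (rule card_UN_disjoint) (auto simp: finite_pos)
  also have "\<dots> = (\<Sum>i<length ts. card (pos (ts ! i)))"
    by (simp add: card_image)
  finally show ?thesis .
qed

lemma nodes_abst: "nodes (abst t) = card (pos t)"
proof (induction t rule: pos.induct)
  case (1 ts)
  have "nodes (abst (PN ts)) = Suc (sum_list (map (nodes \<circ> abst) ts))"
    by (simp add: sum_mset_sum_list image_mset.compositionality flip: mset_map)
  also have "sum_list (map (nodes \<circ> abst) ts) = (\<Sum>i<length ts. nodes (abst (ts ! i)))"
    by (simp add: sum_list_sum_nth atLeast0LessThan)
  also have "\<dots> = (\<Sum>i<length ts. card (pos (ts ! i)))"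
    using 1 by simp
  finally show ?case by (simp only: card_pos_PN)
qed

lemma nverts_abst: "nverts (abst t) = card (pos t)"
proof -
  have "abst (rep (abst t)) = abst t" unfolding rep_def by (rule someI) (rule refl)
  then show ?thesis unfolding nverts_def by (metis nodes_abst)
qed

text \<open>\<open>reach S r t\<close> is the vertex set of \<open>res S r t\<close>, read in the subtree \<open>t\<close> at position \<open>r\<close>:
  the positions \<open>p\<close> whose path from \<open>r\<close> to \<open>r @ p\<close> stays inside \<open>S\<close> (after leaving \<open>r\<close>).\<close>
definition reach :: "nat list set \<Rightarrow> nat list \<Rightarrow> ptree \<Rightarrow> nat list set" where
  "reach S r t = {p \<in> pos t. \<forall>j. 0 < j \<and> j \<le> length p \<longrightarrow> r @ take j p \<in> S}"

lemma finite_reach: "finite (reach S r t)"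
  unfolding reach_def using finite_pos by auto

lemma prefixes_in_Cons_iff:
  "(\<forall>j. 0 < j \<and> j \<le> length (i # p) \<longrightarrow> r @ take j (i # p) \<in> S) \<longleftrightarrow>
   r @ [i] \<in> S \<and> (\<forall>j. 0 < j \<and> j \<le> length p \<longrightarrow> (r @ [i]) @ take j p \<in> S)"
proof safe
  assume "\<forall>j. 0 < j \<and> j \<le> length (i # p) \<longrightarrow> r @ take j (i # p) \<in> S"
  then have H: "\<And>j. 0 < j \<Longrightarrow> j \<le> length (i # p) \<Longrightarrow> r @ take j (i # p) \<in> S" by blast
  show "r @ [i] \<in> S" using H[of 1] by simp
  fix j assume "0 < j" "j \<le> length p"
  then show "(r @ [i]) @ take j p \<in> S" using H[of "Suc j"] by simp
next
  fix j assume A: "r @ [i] \<in> S" "\<forall>j. 0 < j \<and> j \<le> length p \<longrightarrow> (r @ [i]) @ take j p \<in> S"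
    and j: "0 < j" "j \<le> length (i # p)"
  then obtain j' where j': "j = Suc j'" by (cases j) auto
  show "r @ take j (i # p) \<in> S"
  proof (cases "j' = 0")
    case True then show ?thesis using A j' by simp
  next
    case False then show ?thesis using A j j' by auto
  qed
qed

lemma Cons_in_reach_iff: "(i # p \<in> reach S r (PN ts)) \<longleftrightarrow>
   i < length ts \<and> r @ [i] \<in> S \<and> p \<in> reach S (r @ [i]) (ts ! i)"
  unfolding reach_def by (simp only: mem_Collect_eq Cons_in_pos_iff prefixes_in_Cons_iff) blast

lemma reach_PN: "reach S r (PN ts) =
  insert [] (\<Union>i\<in>{i. i < length ts \<and> r @ [i] \<in> S}. Cons i ` reach S (r @ [i]) (ts ! i))"
proof (rule set_eqI)
  fix x show "x \<in> reach S r (PN ts) \<longleftrightarrow>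
     x \<in> insert [] (\<Union>i\<in>{i. i < length ts \<and> r @ [i] \<in> S}. Cons i ` reach S (r @ [i]) (ts ! i))"
  proof (cases x)
    case Nil then show ?thesis by (simp add: reach_def)
  next
    case (Cons i p) then show ?thesis by (auto simp only: Cons_in_reach_iff)
  qed
qed

lemma card_reach_PN: "card (reach S r (PN ts)) =
  Suc (\<Sum>i\<in>{i. i < length ts \<and> r @ [i] \<in> S}. card (reach S (r @ [i]) (ts ! i)))"
proof -
  have "card (reach S r (PN ts)) = Suc (card (\<Union>i\<in>{i. i < length ts \<and> r @ [i] \<in> S}. Cons i ` reach S (r @ [i]) (ts ! i)))"
    by (subst reach_PN, rule card_insert_disjoint) (auto simp: finite_reach)
  also have "card (\<Union>i\<in>{i. i < length ts \<and> r @ [i] \<in> S}. Cons i ` reach S (r @ [i]) (ts ! i))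
     = (\<Sum>i\<in>{i. i < length ts \<and> r @ [i] \<in> S}. card (Cons i ` reach S (r @ [i]) (ts ! i)))"
    by (rule card_UN_disjoint) (auto simp: finite_reach)
  also have "\<dots> = (\<Sum>i\<in>{i. i < length ts \<and> r @ [i] \<in> S}. card (reach S (r @ [i]) (ts ! i)))"
    by (simp add: card_image)
  finally show ?thesis .
qed

lemma card_pos_res: "card (pos (res S r t)) = card (reach S r t)"
proof (induction t arbitrary: r rule: pos.induct)
  case (1 ts)
  define fl where "fl = filter (\<lambda>i. r @ [i] \<in> S) [0..<length ts]"
  have res: "res S r (PN ts) = PN (map (\<lambda>i. res S (r @ [i]) (ts ! i)) fl)"
    by (simp add: fl_def)
  have fl_lt: "j < length fl \<Longrightarrow> fl ! j < length ts" for j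
    using nth_mem[of j fl] by (auto simp: fl_def)
  have "card (pos (res S r (PN ts))) = Suc (\<Sum>j<length fl. card (pos (res S (r @ [fl ! j]) (ts ! (fl ! j)))))"
    by (simp only: res card_pos_PN) simp
  also have "(\<Sum>j<length fl. card (pos (res S (r @ [fl ! j]) (ts ! (fl ! j)))))
      = (\<Sum>j<length fl. card (reach S (r @ [fl ! j]) (ts ! (fl ! j))))"
    using 1 fl_lt by (intro sum.cong) auto
  also have "\<dots> = sum_list (map (\<lambda>i. card (reach S (r @ [i]) (ts ! i))) fl)"
    by (simp add: sum_list_sum_nth atLeast0LessThan)
  also have "\<dots> = (\<Sum>i\<in>set fl. card (reach S (r @ [i]) (ts ! i)))"
    by (rule sum_list_distinct_conv_sum_set) (simp add: fl_def)
  also have "set fl = {i. i < length ts \<and> r @ [i] \<in> S}"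
    by (auto simp: fl_def)
  finally show ?case by (simp only: card_reach_PN)
qed

lemma append_in_pos_iff: "q \<in> pos T \<Longrightarrow> (q @ p \<in> pos T \<longleftrightarrow> p \<in> pos (sub T q))"
proof (induction q arbitrary: T)
  case Nil then show ?case by simp
next
  case (Cons i q)
  obtain ts where T: "T = PN ts" by (cases T)
  show ?case using Cons.prems Cons.IH[of "ts ! i"] by (simp only: T Cons_in_pos_iff append_Cons sub.simps) blast
qed

definition piece :: "ptree \<Rightarrow> nat list set \<Rightarrow> nat list \<Rightarrow> nat list set" where
  "piece T S q = (\<lambda>p. q @ p) ` reach S q (sub T q)"

lemma card_piece: "card (piece T S q) = card (reach S q (sub T q))"
  unfolding piece_def by (rule card_image) (simp add: inj_on_def)

lemma finite_piece: "finite (piece T S q)"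
  unfolding piece_def by (simp add: finite_reach)

lemma piece_subset_pos: "q \<in> pos T \<Longrightarrow> piece T S q \<subseteq> pos T"
  unfolding piece_def reach_def using append_in_pos_iff by auto

lemma piece_memD: "v \<in> piece T S q \<Longrightarrow>
   \<exists>p. v = q @ p \<and> (\<forall>j. 0 < j \<and> j \<le> length p \<longrightarrow> q @ take j p \<in> S)"
  unfolding piece_def reach_def by auto

definition separated :: "nat list set \<Rightarrow> nat list set \<Rightarrow> bool" where
  "separated S Q \<longleftrightarrow> (\<forall>q1\<in>Q. \<forall>d. d \<noteq> [] \<longrightarrow> q1 @ d \<in> Q \<longrightarrow>
     (\<exists>j. 0 < j \<and> j \<le> length d \<and> q1 @ take j d \<notin> S))"

lemma pieces_disjoint_by_length:
  assumes H: "\<And>d. d \<noteq> [] \<Longrightarrow> q2 = q1 @ d \<Longrightarrow> \<exists>j. 0 < j \<and> j \<le> length d \<and> q1 @ take j d \<notin> S"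
    and ne: "q1 \<noteq> q2" and v1: "v = q1 @ p1" and v2: "v = q2 @ p2"
    and c1: "\<forall>j. 0 < j \<and> j \<le> length p1 \<longrightarrow> q1 @ take j p1 \<in> S"
    and l: "length q1 \<le> length q2"
  shows False
proof -
  obtain d where d: "q2 = q1 @ d" "p1 = d @ p2"
    using v1 v2 l by (auto simp: append_eq_append_conv2)
  have "d \<noteq> []" using d ne by auto
  then obtain j where j: "0 < j" "j \<le> length d" "q1 @ take j d \<notin> S" using H d by blast
  moreover have "take j p1 = take j d" using d j by simp
  ultimately show False using c1 d by auto
qed

lemma pieces_disjoint:
  assumes "separated S Q" and q: "q1 \<in> Q" "q2 \<in> Q" "q1 \<noteq> q2"
  shows "piece T S q1 \<inter> piece T S q2 = {}"
proof (rule ccontr)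
  have H: "\<And>q1 q2 d. q1 \<in> Q \<Longrightarrow> q2 \<in> Q \<Longrightarrow> d \<noteq> [] \<Longrightarrow> q2 = q1 @ d \<Longrightarrow>
        \<exists>j. 0 < j \<and> j \<le> length d \<and> q1 @ take j d \<notin> S" using assms(1) unfolding separated_def by blast
  assume "piece T S q1 \<inter> piece T S q2 \<noteq> {}"
  then obtain v where "v \<in> piece T S q1" "v \<in> piece T S q2" by blast
  then obtain p1 p2 where v1: "v = q1 @ p1" "\<forall>j. 0 < j \<and> j \<le> length p1 \<longrightarrow> q1 @ take j p1 \<in> S"
    and v2: "v = q2 @ p2" "\<forall>j. 0 < j \<and> j \<le> length p2 \<longrightarrow> q2 @ take j p2 \<in> S"
    using piece_memD by metis
  show False
  proof (cases "length q1 \<le> length q2")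
    case True
    show False by (rule pieces_disjoint_by_length[OF H[OF q(1,2)] q(3) v1(1) v2(1) v1(2) True])
  next
    case False
    then have nl: "length q2 \<le> length q1" by linarith
    show False by (rule pieces_disjoint_by_length[OF H[OF q(2,1)] q(3)[symmetric] v2(1) v1(1) v2(2) nl])
  qed
qed

lemma piece_subset: "q \<in> S \<Longrightarrow> piece T S q \<subseteq> S"
proof
  fix v assume "q \<in> S" "v \<in> piece T S q"
  then obtain p where p: "v = q @ p" "\<forall>j. 0 < j \<and> j \<le> length p \<longrightarrow> q @ take j p \<in> S"
    using piece_memD by metis
  show "v \<in> S"
  proof (cases "p = []")
    case True then show ?thesis using p \<open>q \<in> S\<close> by simp
  next
    case False then show ?thesis using p(2)[rule_format, of "length p"] p(1) by simp
  qed
qed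

lemma card_disjoint_pieces_le:
  assumes QP: "Q \<subseteq> pos T" and A: "A \<subseteq> pos T"
    and H: "separated S Q" and dA: "\<And>q. q \<in> Q \<Longrightarrow> A \<inter> piece T S q = {}"
  shows "card A + (\<Sum>q\<in>Q. card (piece T S q)) \<le> card (pos T)"
proof -
  have fQ: "finite Q" using QP finite_pos finite_subset by blast
  have "(\<Sum>q\<in>Q. card (piece T S q)) = card (\<Union>q\<in>Q. piece T S q)"
    by (rule card_UN_disjoint[symmetric]) (use fQ finite_piece pieces_disjoint[OF H] in auto)
  moreover have "card A + card (\<Union>q\<in>Q. piece T S q) = card (A \<union> (\<Union>q\<in>Q. piece T S q))"
  proof (rule card_Un_disjoint[symmetric])
    show "finite A" using A finite_pos finite_subset by blast
    show "finite (\<Union>q\<in>Q. piece T S q)" using fQ finite_piece by blast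
    show "A \<inter> (\<Union>q\<in>Q. piece T S q) = {}" using dA by blast
  qed
  moreover have "card (A \<union> (\<Union>q\<in>Q. piece T S q)) \<le> card (pos T)"
    by (rule card_mono[OF finite_pos]) (use A QP piece_subset_pos in blast)
  ultimately show ?thesis by simp
qed

lemma nverts_piece: "nverts (abst (res S q (sub T q))) = card (piece T S q)"
  by (simp add: nverts_abst card_pos_res card_piece)

text \<open>The trees of \<open>\<tau> \ s\<close> are rooted at vertices outside \<open>s\<close> whose parent lies in \<open>s\<close>,
  so none of them can be reached from another one without passing through \<open>s\<close>.\<close>
lemma root_not_reachable_outside:
  assumes "butlast (q1 @ d) \<in> s" "q1 \<notin> s" "d \<noteq> []"
  shows "\<exists>j. 0 < j \<and> j \<le> length d \<and> q1 @ take j d \<notin> P - s"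
proof -
  have parent: "butlast (q1 @ d) = q1 @ butlast d" using assms(3) by (simp add: butlast_append)
  then have "butlast d \<noteq> []" using assms(1,2) by auto
  then have "0 < length d - 1" by (cases d) auto
  moreover have "q1 @ take (length d - 1) d = butlast (q1 @ d)"
    using parent by (simp add: butlast_conv_take)
  ultimately show ?thesis using assms(1) by (intro exI[of _ "length d - 1"]) auto
qed

lemma nverts_ost_le:
  assumes s: "s \<in> OST \<tau>"
  shows "nverts0 (ost_tree \<tau> s) + (\<Sum>q\<in>{q \<in> pos (rep \<tau>) - s. q = [] \<or> butlast q \<in> s}.
           nverts (abst (res (pos (rep \<tau>) - s) q (sub (rep \<tau>) q)))) \<le> nverts \<tau>"
proof -
  define T where "T = rep \<tau>"
  define Q where "Q = {q \<in> pos T - s. q = [] \<or> butlast q \<in> s}"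
  define A where "A = (if s = {} then {} else piece T s [])"
  have sc: "s = {} \<or> [] \<in> s" using s unfolding OST_def by auto
  have A0: "nverts0 (ost_tree \<tau> s) = card A"
    using nverts_piece[of s "[]" T] by (simp add: A_def ost_tree_def nverts0_def T_def)
  have "card A + (\<Sum>q\<in>Q. card (piece T (pos T - s) q)) \<le> card (pos T)"
  proof (rule card_disjoint_pieces_le)
    show "Q \<subseteq> pos T" unfolding Q_def by blast
    show "A \<subseteq> pos T" unfolding A_def using piece_subset_pos[of "[]" T] by auto
    show "separated (pos T - s) Q"
      unfolding separated_def
    proof (intro ballI allI impI)
      fix q1 d assume "q1 \<in> Q" "d \<noteq> []" "q1 @ d \<in> Q"
      then show "\<exists>j. 0 < j \<and> j \<le> length d \<and> q1 @ take j d \<notin> pos T - s"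
        by (intro root_not_reachable_outside) (auto simp: Q_def)
    qed
  next
    fix q assume "q \<in> Q"
    then have "piece T (pos T - s) q \<subseteq> pos T - s" by (intro piece_subset) (simp add: Q_def)
    moreover have "A \<subseteq> s" using sc piece_subset[of "[]" s T] by (auto simp: A_def)
    ultimately show "A \<inter> piece T (pos T - s) q = {}" by blast
  qed
  then show ?thesis using A0 unfolding Q_def T_def nverts_def[of \<tau>] by (simp add: nverts_piece)
qed

lemma nverts_part_forest_le:
  assumes p: "p \<in> partitions \<tau>"
  shows "(\<Sum>q\<in>insert [] p. nverts (abst (res (pos (rep \<tau>) - p) q (sub (rep \<tau>) q)))) \<le> nverts \<tau>"
proof -
  define T where "T = rep \<tau>"
  have pP: "p \<subseteq> pos T - {[]}" using p unfolding partitions_def edges_def T_def by auto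
  have "card ({}::nat list set) + (\<Sum>q\<in>insert [] p. card (piece T (pos T - p) q)) \<le> card (pos T)"
  proof (rule card_disjoint_pieces_le)
    show "insert [] p \<subseteq> pos T" using pP by auto
    show "separated (pos T - p) (insert [] p)"
      unfolding separated_def by (auto intro!: exI[of _ "length d" for d])
  qed auto
  then show ?thesis unfolding T_def nverts_def[of \<tau>] by (simp add: nverts_piece)
qed

lemma card_OST_le: "card (OST \<tau>) \<le> 2 ^ nverts \<tau>"
proof -
  have "card (OST \<tau>) \<le> card (Pow (pos (rep \<tau>)))"
    by (rule card_mono) (auto simp: OST_def finite_pos)
  then show ?thesis by (simp add: card_Pow nverts_def finite_pos)
qed

lemma finite_edges: "finite (edges \<tau>)"
  by (simp add: edges_def finite_pos)

lemma card_partitions_le: "card (partitions \<tau>) \<le> 2 ^ nverts \<tau>"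
proof -
  have "card (edges \<tau>) \<le> nverts \<tau>"
    unfolding nverts_def edges_def by (rule card_mono[OF finite_pos]) auto
  then show ?thesis by (simp add: partitions_def card_Pow finite_edges)
qed

lemma forest_val_ost: "forest_val a (ost_forest \<tau> s) =
   (\<Prod>q\<in>{q \<in> pos (rep \<tau>) - s. q = [] \<or> butlast q \<in> s}.
      a (Some (abst (res (pos (rep \<tau>) - s) q (sub (rep \<tau>) q)))))"
  unfolding forest_val_def ost_forest_def
  by (simp add: image_mset.compositionality prod_unfold_prod_mset comp_def)

lemma forest_val_part: "forest_val a (part_forest \<tau> p) =
   (\<Prod>q\<in>insert [] p. a (Some (abst (res (pos (rep \<tau>) - p) q (sub (rep \<tau>) q)))))"
  unfolding forest_val_def part_forest_def
  by (simp add: image_mset.compositionality prod_unfold_prod_mset comp_def)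

section \<open>Lipschitz estimates for the coefficients\<close>

lemma norm_prod_le:
  fixes f :: "'i \<Rightarrow> complex"
  assumes "finite I" "\<And>i. i \<in> I \<Longrightarrow> cmod (f i) \<le> R * c i" "0 \<le> R"
  shows "cmod (\<Prod>i\<in>I. f i) \<le> R ^ card I * (\<Prod>i\<in>I. c i)"
proof -
  have "cmod (\<Prod>i\<in>I. f i) = (\<Prod>i\<in>I. cmod (f i))" by (simp add: prod_norm)
  also have "\<dots> \<le> (\<Prod>i\<in>I. R * c i)" by (rule prod_mono) (use assms in auto)
  also have "\<dots> = R ^ card I * (\<Prod>i\<in>I. c i)" by (simp add: prod.distrib)
  finally show ?thesis .
qed

lemma norm_prod_diff_le:
  fixes f g :: "'i \<Rightarrow> complex"
  assumes "finite I"
    and f: "\<And>i. i \<in> I \<Longrightarrow> cmod (f i) \<le> R * c i"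
    and g: "\<And>i. i \<in> I \<Longrightarrow> cmod (g i) \<le> R * c i"
    and fg: "\<And>i. i \<in> I \<Longrightarrow> cmod (f i - g i) \<le> d * c i"
    and R: "1 \<le> R" and d: "0 \<le> d" and c: "\<And>i. 0 \<le> c i"
  shows "cmod ((\<Prod>i\<in>I. f i) - (\<Prod>i\<in>I. g i)) \<le> real (card I) * d * R ^ card I * (\<Prod>i\<in>I. c i)"
  using assms(1) f g fg
proof (induction I rule: finite_induct)
  case empty then show ?case by simp
next
  case (insert x F)
  have IH: "cmod ((\<Prod>i\<in>F. f i) - (\<Prod>i\<in>F. g i)) \<le> real (card F) * d * R ^ card F * (\<Prod>i\<in>F. c i)"
    using insert by auto
  have bg: "cmod (\<Prod>i\<in>F. g i) \<le> R ^ card F * (\<Prod>i\<in>F. c i)"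
    by (rule norm_prod_le) (use insert R in auto)
  have cF: "0 \<le> (\<Prod>i\<in>F. c i)" by (simp add: prod_nonneg c)
  have e: "(\<Prod>i\<in>insert x F. f i) - (\<Prod>i\<in>insert x F. g i)
      = f x * ((\<Prod>i\<in>F. f i) - (\<Prod>i\<in>F. g i)) + (f x - g x) * (\<Prod>i\<in>F. g i)"
    using insert by (simp add: algebra_simps)
  have "cmod (f x * ((\<Prod>i\<in>F. f i) - (\<Prod>i\<in>F. g i)) + (f x - g x) * (\<Prod>i\<in>F. g i))
     \<le> cmod (f x) * cmod ((\<Prod>i\<in>F. f i) - (\<Prod>i\<in>F. g i)) + cmod (f x - g x) * cmod (\<Prod>i\<in>F. g i)"
    by (metis norm_mult norm_triangle_ineq)
  also have "\<dots> \<le> (R * c x) * (real (card F) * d * R ^ card F * (\<Prod>i\<in>F. c i)) + (d * c x) * (R ^ card F * (\<Prod>i\<in>F. c i))"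
    by (intro add_mono mult_mono IH bg) (use insert R d c in auto)
  also have "\<dots> = (real (card F) * R + 1) * d * R ^ card F * (c x * (\<Prod>i\<in>F. c i))"
    by (simp add: algebra_simps)
  also have "\<dots> \<le> (real (card F) * R + R) * d * R ^ card F * (c x * (\<Prod>i\<in>F. c i))"
    by (intro mult_right_mono) (use R d cF c in auto)
  also have "\<dots> = real (card (insert x F)) * d * R ^ card (insert x F) * (\<Prod>i\<in>insert x F. c i)"
    using insert by (simp add: algebra_simps)
  finally show ?case by (simp only: e)
qed

lemma norm_mult_diff_le:
  fixes x x' y y' :: complex
  assumes "cmod x' \<le> R * \<alpha>" "cmod (x' - x) \<le> d * \<alpha>"
    "cmod y \<le> R ^ m * \<beta>" "cmod (y' - y) \<le> real m * d * R ^ m * \<beta>"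
    "1 \<le> R" "0 \<le> d" "0 \<le> \<alpha>" "0 \<le> \<beta>"
  shows "cmod (x' * y' - x * y) \<le> real (m + 1) * d * R ^ (m + 1) * (\<alpha> * \<beta>)"
proof -
  have "x' * y' - x * y = x' * (y' - y) + (x' - x) * y" by (simp add: algebra_simps)
  then have "cmod (x' * y' - x * y) \<le> cmod x' * cmod (y' - y) + cmod (x' - x) * cmod y"
    by (metis norm_mult norm_triangle_ineq)
  also have "\<dots> \<le> (R * \<alpha>) * (real m * d * R ^ m * \<beta>) + (d * \<alpha>) * (R ^ m * \<beta>)"
    by (intro add_mono mult_mono) (use assms in auto)
  also have "\<dots> = (real m * R + 1) * d * R ^ m * (\<alpha> * \<beta>)" by (simp add: algebra_simps)
  also have "\<dots> \<le> (real m * R + R) * d * R ^ m * (\<alpha> * \<beta>)"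
    by (intro mult_right_mono) (use assms in auto)
  also have "\<dots> = real (m + 1) * d * R ^ (m + 1) * (\<alpha> * \<beta>)" by (simp add: algebra_simps)
  finally show ?thesis .
qed

lemma growth_bound_mono:
  fixes R K d :: real
  assumes "1 \<le> R" "1 \<le> K" "0 \<le> d" "m \<le> n" "w \<le> n"
  shows "real (m + 1) * d * R ^ (m + 1) * K ^ w \<le> real (n + 1) * d * R ^ (n + 1) * K ^ n"
proof -
  have "R ^ (m + 1) \<le> R ^ (n + 1)" by (rule power_increasing) (use assms in auto)
  moreover have "K ^ w \<le> K ^ n" by (rule power_increasing) (use assms in auto)
  moreover have "real (m + 1) \<le> real (n + 1)" using assms by simp
  ultimately show ?thesis using assms
    by (intro mult_mono) (auto intro: mult_nonneg_nonneg)
qed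

lemma norm_bmult_term_diff_le:
  fixes R K d :: real
  assumes R: "1 \<le> R" and K: "1 \<le> K" and d: "0 \<le> d"
    and ba: "\<And>x. cmod (a x) \<le> R * K ^ nverts0 x" and ba': "\<And>x. cmod (a' x) \<le> R * K ^ nverts0 x"
    and bb': "\<And>x. cmod (b' x) \<le> R * K ^ nverts0 x"
    and ca: "\<And>x. cmod (a' x - a x) \<le> d * K ^ nverts0 x"
    and cb: "\<And>x. cmod (b' x - b x) \<le> d * K ^ nverts0 x"
    and s: "s \<in> OST \<tau>"
  shows "cmod (b' (ost_tree \<tau> s) * forest_val a' (ost_forest \<tau> s) - b (ost_tree \<tau> s) * forest_val a (ost_forest \<tau> s))
     \<le> real (nverts \<tau> + 1) * d * R ^ (nverts \<tau> + 1) * K ^ nverts \<tau>"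
proof -
  define Q where "Q = {q \<in> pos (rep \<tau>) - s. q = [] \<or> butlast q \<in> s}"
  define g where "g q = abst (res (pos (rep \<tau>) - s) q (sub (rep \<tau>) q))" for q
  have fQ: "finite Q" unfolding Q_def using finite_pos by auto
  have mQ: "card Q \<le> nverts \<tau>" unfolding nverts_def Q_def
    by (rule card_mono[OF finite_pos]) auto
  have w: "nverts0 (ost_tree \<tau> s) + (\<Sum>q\<in>Q. nverts (g q)) \<le> nverts \<tau>"
    using nverts_ost_le[OF s] unfolding Q_def g_def .
  have fv: "forest_val u (ost_forest \<tau> s) = (\<Prod>q\<in>Q. u (Some (g q)))" for u
    unfolding forest_val_ost Q_def g_def ..
  have c0: "\<And>q. 0 \<le> K ^ nverts (g q)" using K by simp
  have y: "cmod (\<Prod>q\<in>Q. a (Some (g q))) \<le> R ^ card Q * (\<Prod>q\<in>Q. K ^ nverts (g q))"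
    by (rule norm_prod_le[OF fQ]) (use ba[of "Some _"] R in \<open>auto simp: nverts0_def\<close>)
  have yd: "cmod ((\<Prod>q\<in>Q. a' (Some (g q))) - (\<Prod>q\<in>Q. a (Some (g q))))
       \<le> real (card Q) * d * R ^ card Q * (\<Prod>q\<in>Q. K ^ nverts (g q))"
    by (rule norm_prod_diff_le[OF fQ _ _ _ R d c0]) (use ba[of "Some _"] ba'[of "Some _"] ca[of "Some _"] in \<open>auto simp: nverts0_def\<close>)
  have "cmod (b' (ost_tree \<tau> s) * (\<Prod>q\<in>Q. a' (Some (g q))) - b (ost_tree \<tau> s) * (\<Prod>q\<in>Q. a (Some (g q))))
     \<le> real (card Q + 1) * d * R ^ (card Q + 1) * (K ^ nverts0 (ost_tree \<tau> s) * (\<Prod>q\<in>Q. K ^ nverts (g q)))"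
    by (rule norm_mult_diff_le[OF bb' cb y yd R d]) (use K in \<open>auto intro: prod_nonneg\<close>)
  also have "K ^ nverts0 (ost_tree \<tau> s) * (\<Prod>q\<in>Q. K ^ nverts (g q)) = K ^ (nverts0 (ost_tree \<tau> s) + (\<Sum>q\<in>Q. nverts (g q)))"
    by (simp add: power_add power_sum)
  also have "real (card Q + 1) * d * R ^ (card Q + 1) * \<dots> \<le> real (nverts \<tau> + 1) * d * R ^ (nverts \<tau> + 1) * K ^ nverts \<tau>"
    by (rule growth_bound_mono[OF R K d mQ w])
  finally show ?thesis by (simp only: fv)
qed

lemma norm_bmult_diff_le:
  fixes R K d :: real
  assumes R: "1 \<le> R" and K: "1 \<le> K" and d: "0 \<le> d"
    and ba: "\<And>x. cmod (a x) \<le> R * K ^ nverts0 x" and ba': "\<And>x. cmod (a' x) \<le> R * K ^ nverts0 x"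
    and bb': "\<And>x. cmod (b' x) \<le> R * K ^ nverts0 x"
    and ca: "\<And>x. cmod (a' x - a x) \<le> d * K ^ nverts0 x"
    and cb: "\<And>x. cmod (b' x - b x) \<le> d * K ^ nverts0 x"
  shows "cmod (bmult a' b' (Some \<tau>) - bmult a b (Some \<tau>))
     \<le> 2 ^ nverts \<tau> * (real (nverts \<tau> + 1) * d * R ^ (nverts \<tau> + 1) * K ^ nverts \<tau>)"
proof -
  define B where "B = real (nverts \<tau> + 1) * d * R ^ (nverts \<tau> + 1) * K ^ nverts \<tau>"
  have B0: "0 \<le> B" unfolding B_def using R K d by auto
  have "cmod (bmult a' b' (Some \<tau>) - bmult a b (Some \<tau>)) =
     cmod (\<Sum>s\<in>OST \<tau>. b' (ost_tree \<tau> s) * forest_val a' (ost_forest \<tau> s) - b (ost_tree \<tau> s) * forest_val a (ost_forest \<tau> s))"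
    by (simp add: bmult_def sum_subtractf)
  also have "\<dots> \<le> (\<Sum>s\<in>OST \<tau>. B)"
    by (rule sum_norm_le) (use norm_bmult_term_diff_le[OF R K d ba ba' bb' ca cb] in \<open>auto simp: B_def\<close>)
  also have "\<dots> = real (card (OST \<tau>)) * B" by simp
  also have "\<dots> \<le> 2 ^ nverts \<tau> * B"
    by (rule mult_right_mono[OF _ B0]) (use card_OST_le[of \<tau>] in \<open>simp flip: of_nat_le_iff\<close>)
  finally show ?thesis by (simp add: B_def)
qed

lemma norm_binv_term_diff_le:
  fixes R K d :: real
  assumes R: "1 \<le> R" and K: "1 \<le> K" and d: "0 \<le> d"
    and ba: "\<And>x. cmod (a x) \<le> R * K ^ nverts0 x" and ba': "\<And>x. cmod (a' x) \<le> R * K ^ nverts0 x"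
    and ca: "\<And>x. cmod (a' x - a x) \<le> d * K ^ nverts0 x"
    and p: "p \<in> partitions \<tau>"
  shows "cmod ((-1) ^ size (part_forest \<tau> p) * forest_val a' (part_forest \<tau> p)
       - (-1) ^ size (part_forest \<tau> p) * forest_val a (part_forest \<tau> p))
     \<le> real (nverts \<tau> + 1) * d * R ^ (nverts \<tau> + 1) * K ^ nverts \<tau>"
proof -
  define Q where "Q = insert [] p"
  define g where "g q = abst (res (pos (rep \<tau>) - p) q (sub (rep \<tau>) q))" for q
  have QP: "Q \<subseteq> pos (rep \<tau>)" using p unfolding Q_def partitions_def edges_def by auto
  have fQ: "finite Q" using QP finite_pos finite_subset by blast
  have mQ: "card Q \<le> nverts \<tau>" unfolding nverts_def by (rule card_mono[OF finite_pos QP])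
  have w: "(\<Sum>q\<in>Q. nverts (g q)) \<le> nverts \<tau>"
    using nverts_part_forest_le[OF p] unfolding Q_def g_def .
  have fv: "forest_val u (part_forest \<tau> p) = (\<Prod>q\<in>Q. u (Some (g q)))" for u
    unfolding forest_val_part Q_def g_def ..
  have c0: "\<And>q. 0 \<le> K ^ nverts (g q)" using K by simp
  have "cmod ((-1) ^ size (part_forest \<tau> p) * forest_val a' (part_forest \<tau> p)
       - (-1) ^ size (part_forest \<tau> p) * forest_val a (part_forest \<tau> p))
     = cmod ((\<Prod>q\<in>Q. a' (Some (g q))) - (\<Prod>q\<in>Q. a (Some (g q))))"
    by (simp add: fv flip: right_diff_distrib) (simp only: norm_mult norm_power, simp)
  also have "\<dots> \<le> real (card Q) * d * R ^ card Q * (\<Prod>q\<in>Q. K ^ nverts (g q))"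
    by (rule norm_prod_diff_le[OF fQ _ _ _ R d c0])
      (use ba[of "Some _"] ba'[of "Some _"] ca[of "Some _"] in \<open>auto simp: nverts0_def\<close>)
  also have "\<dots> \<le> real (card Q + 1) * d * R ^ (card Q + 1) * (\<Prod>q\<in>Q. K ^ nverts (g q))"
  proof -
    have "R ^ card Q \<le> R ^ (card Q + 1)" using R by (intro power_increasing) auto
    then show ?thesis using R d c0 by (intro mult_right_mono mult_mono prod_nonneg) auto
  qed
  also have "(\<Prod>q\<in>Q. K ^ nverts (g q)) = K ^ (\<Sum>q\<in>Q. nverts (g q))"
    by (simp add: power_sum)
  also have "real (card Q + 1) * d * R ^ (card Q + 1) * \<dots>
      \<le> real (nverts \<tau> + 1) * d * R ^ (nverts \<tau> + 1) * K ^ nverts \<tau>"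
    by (rule growth_bound_mono[OF R K d mQ w])
  finally show ?thesis .
qed

lemma norm_binv_diff_le:
  fixes R K d :: real
  assumes R: "1 \<le> R" and K: "1 \<le> K" and d: "0 \<le> d"
    and ba: "\<And>x. cmod (a x) \<le> R * K ^ nverts0 x" and ba': "\<And>x. cmod (a' x) \<le> R * K ^ nverts0 x"
    and ca: "\<And>x. cmod (a' x - a x) \<le> d * K ^ nverts0 x"
  shows "cmod (binv a' (Some \<tau>) - binv a (Some \<tau>))
     \<le> 2 ^ nverts \<tau> * (real (nverts \<tau> + 1) * d * R ^ (nverts \<tau> + 1) * K ^ nverts \<tau>)"
proof -
  define B where "B = real (nverts \<tau> + 1) * d * R ^ (nverts \<tau> + 1) * K ^ nverts \<tau>"
  have B0: "0 \<le> B" unfolding B_def using R K d by auto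
  have "cmod (binv a' (Some \<tau>) - binv a (Some \<tau>)) =
     cmod (\<Sum>p\<in>partitions \<tau>. (-1) ^ size (part_forest \<tau> p) * forest_val a' (part_forest \<tau> p)
       - (-1) ^ size (part_forest \<tau> p) * forest_val a (part_forest \<tau> p))"
    by (simp add: binv_def sum_subtractf)
  also have "\<dots> \<le> (\<Sum>p\<in>partitions \<tau>. B)"
    by (rule sum_norm_le) (use norm_binv_term_diff_le[OF R K d ba ba' ca] in \<open>auto simp: B_def\<close>)
  also have "\<dots> = real (card (partitions \<tau>)) * B" by simp
  also have "\<dots> \<le> 2 ^ nverts \<tau> * B"
    by (rule mult_right_mono[OF _ B0]) (use card_partitions_le[of \<tau>] in \<open>simp flip: of_nat_le_iff\<close>)
  finally show ?thesis by (simp add: B_def)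
qed

lemma bmult_zero: "bmult (\<lambda>_. 0) (\<lambda>_. 0) (Some \<tau>) = 0"
  by (simp add: bmult_def)

text \<open>Every forest \<open>\<tau> \ p\<close> contains the tree through the root, so each summand of
  the inverse of the zero function vanishes.\<close>
lemma binv_zero: "binv (\<lambda>_. 0) (Some \<tau>) = 0"
proof -
  have "finite p" if "p \<in> partitions \<tau>" for p
    using that finite_edges[of \<tau>] unfolding partitions_def by (auto intro: finite_subset)
  then show ?thesis
    by (simp add: binv_def forest_val_part) (intro sum.neutral ballI, simp add: card_gt_0_iff)
qed

section \<open>Passing to the weighted norms\<close>

lemma tree_bound_weighted_le:
  fixes R d :: real and k N n :: nat
  assumes R: "1 \<le> R" and RN: "8 * R < 2 ^ (N - k)" and d: "0 \<le> d"
  shows "2 ^ n * (real (n + 1) * d * R ^ (n + 1) * (2 ^ k) ^ n) * (1 / 2) ^ (N * n) \<le> d * R"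
proof -
  have kN: "k \<le> N"
  proof (rule ccontr)
    assume "\<not> k \<le> N" then have "N - k = 0" by simp
    then show False using RN R by simp
  qed
  define L :: real where "L = 2 ^ (N - k)"
  have L0: "0 < L" unfolding L_def by simp
  have N2: "(2::real) ^ N = 2 ^ k * L" unfolding L_def using kN by (simp flip: power_add)
  have h: "(1 / 2 :: real) ^ (N * n) = 1 / ((2 ^ k) ^ n * L ^ n)"
    by (simp add: power_mult N2 power_mult_distrib power_one_over)
  define q where "q = 2 * R / L"
  have q0: "0 \<le> q" unfolding q_def using R L0 by simp
  have q4: "q \<le> 1 / 4" unfolding q_def using RN L0 by (simp add: L_def field_simps)
  have "2 ^ n * (real (n + 1) * d * R ^ (n + 1) * (2 ^ k) ^ n) * (1 / 2) ^ (N * n)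
      = d * R * (real (n + 1) * q ^ n)"
    unfolding h q_def using L0 by (simp add: field_simps power_mult_distrib power_divide)
  also have "real (n + 1) * q ^ n \<le> 1"
  proof -
    have "Suc n \<le> 2 ^ n" by (rule Suc_leI[OF less_exp])
    then have "real (n + 1) \<le> 2 ^ n" by (metis Suc_eq_plus1 of_nat_le_iff of_nat_numeral of_nat_power)
    moreover have "q ^ n \<le> (1 / 4) ^ n" by (rule power_mono[OF q4 q0])
    ultimately have "real (n + 1) * q ^ n \<le> 2 ^ n * (1 / 4) ^ n"
      using q0 by (intro mult_mono) auto
    also have "\<dots> \<le> 1" using power_mono[of "2::real" 4 n] by (simp add: power_divide)
    finally show ?thesis .
  qed
  then have "d * R * (real (n + 1) * q ^ n) \<le> d * R * 1"
    using d R by (intro mult_left_mono) auto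
  finally show ?thesis by simp
qed

lemma omega_pos: "0 < omega k x"
  by (simp add: omega_def)

lemma omega_Some: "omega N (Some \<tau>) = (1 / 2) ^ (N * nverts \<tau>)"
  by (simp add: omega_def nverts0_def)

lemma Cw_I: "(\<And>x. cmod (f x) * omega k x \<le> B) \<Longrightarrow> f \<in> Cw k"
  unfolding Cw_def by (simp add: bdd_above_def) blast

lemma wnorm_upper: "f \<in> Cw k \<Longrightarrow> cmod (f x) * omega k x \<le> wnorm k f"
  unfolding Cw_def wnorm_def by (rule cSUP_upper) auto

lemma wnorm_least: "(\<And>x. cmod (f x) * omega k x \<le> B) \<Longrightarrow> wnorm k f \<le> B"
  unfolding wnorm_def by (rule cSUP_least) auto

lemma wnorm_nonneg: "f \<in> Cw k \<Longrightarrow> 0 \<le> wnorm k f"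
  using wnorm_upper[of f k None] omega_pos[of k None]
  by (meson dual_order.trans mult_nonneg_nonneg norm_ge_zero less_imp_le)

lemma Cw_diff:
  assumes "a \<in> Cw k" "b \<in> Cw k" shows "(\<lambda>x. a x - b x) \<in> Cw k"
proof (rule Cw_I)
  fix x
  have "cmod (a x - b x) * omega k x \<le> (cmod (a x) + cmod (b x)) * omega k x"
    by (rule mult_right_mono[OF norm_triangle_ineq4]) (use omega_pos[of k x] in simp)
  also have "\<dots> \<le> wnorm k a + wnorm k b"
    using wnorm_upper[OF assms(1), of x] wnorm_upper[OF assms(2), of x] by (simp add: distrib_right)
  finally show "cmod (a x - b x) * omega k x \<le> wnorm k a + wnorm k b" .
qed

lemma bunit_Cw: "bunit \<in> Cw k"
proof (rule Cw_I)
  fix x show "cmod (bunit x) * omega k x \<le> 1"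
    by (cases x) (auto simp: bunit_def omega_def nverts0_def)
qed

lemma norm_le_of_weighted_le:
  "cmod (f x) * omega k x \<le> B \<Longrightarrow> cmod (f x) \<le> B * (2 ^ k) ^ nverts0 x"
  by (simp add: omega_def power_mult power_one_over field_simps)

lemma Cw_wnorm_le_of_tree_bound:
  fixes R d :: real
  assumes R: "1 \<le> R" and RN: "8 * R < 2 ^ (N - k)" and d: "0 \<le> d"
    and root: "cmod (f None) \<le> d * R"
    and tree: "\<And>\<tau>. cmod (f (Some \<tau>))
      \<le> 2 ^ nverts \<tau> * (real (nverts \<tau> + 1) * d * R ^ (nverts \<tau> + 1) * (2 ^ k) ^ nverts \<tau>)"
  shows "f \<in> Cw N" and "wnorm N f \<le> d * R"
proof -
  have "cmod (f x) * omega N x \<le> d * R" for x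
  proof (cases x)
    case None then show ?thesis using root by (simp add: omega_def nverts0_def)
  next
    case (Some \<tau>)
    have "cmod (f x) * omega N x \<le>
        2 ^ nverts \<tau> * (real (nverts \<tau> + 1) * d * R ^ (nverts \<tau> + 1) * (2 ^ k) ^ nverts \<tau>)
        * omega N (Some \<tau>)"
      unfolding Some by (rule mult_right_mono[OF tree less_imp_le[OF omega_pos]])
    also have "\<dots> \<le> d * R"
      unfolding omega_Some by (rule tree_bound_weighted_le[OF R RN d])
    finally show ?thesis .
  qed
  then show "f \<in> Cw N" and "wnorm N f \<le> d * R" by (auto intro: Cw_I wnorm_least)
qed

lemma W_Cw: "a \<in> W k R \<Longrightarrow> a \<in> Cw k"
  by (simp add: W_def wball_def)

lemma W_norm_le:
  assumes a: "a \<in> W k R" and R: "1 \<le> R"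
  shows "cmod (a x) \<le> R * (2 ^ k) ^ nverts0 x"
proof (cases x)
  case None
  then have "a x = 1" using a by (simp add: W_def BTM_def GTM_def)
  then show ?thesis using R None by (simp add: nverts0_def)
next
  case (Some \<tau>)
  have "cmod (a x - bunit x) * omega k x \<le> R"
    using wnorm_upper[OF Cw_diff[OF W_Cw[OF a] bunit_Cw], of x] a by (simp add: W_def wball_def)
  then show ?thesis
    using Some norm_le_of_weighted_le[of "\<lambda>x. a x - bunit x" x k R] by (simp add: bunit_def)
qed

lemma W_norm_diff_le:
  assumes "a \<in> W k R" "a' \<in> W k R"
  shows "cmod (a' x - a x) \<le> wnorm k (\<lambda>x. a' x - a x) * (2 ^ k) ^ nverts0 x"
  by (rule norm_le_of_weighted_le, rule wnorm_upper[OF Cw_diff[OF W_Cw[OF assms(2)] W_Cw[OF assms(1)]]])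

lemma W_wnorm_diff_nonneg: "a \<in> W k R \<Longrightarrow> a' \<in> W k R \<Longrightarrow> 0 \<le> wnorm k (\<lambda>x. a' x - a x)"
  by (rule wnorm_nonneg[OF Cw_diff[OF W_Cw W_Cw]])

lemma bmult_Cw:
  assumes R: "1 \<le> R" and RN: "8 * R < 2 ^ (N - k)" and a: "a \<in> W k R" and b: "b \<in> W k R"
  shows "bmult a b \<in> Cw N"
proof (rule Cw_wnorm_le_of_tree_bound(1)[OF R RN, of R])
  have zero: "cmod ((\<lambda>_. 0::complex) x) \<le> R * (2 ^ k) ^ nverts0 x" for x using R by simp
  show "cmod (bmult a b (Some \<tau>))
      \<le> 2 ^ nverts \<tau> * (real (nverts \<tau> + 1) * R * R ^ (nverts \<tau> + 1) * (2 ^ k) ^ nverts \<tau>)" for \<tau>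
    using norm_bmult_diff_le[OF R _ _ zero W_norm_le[OF a R] W_norm_le[OF b R], where \<tau>=\<tau> and d=R and b="\<lambda>_. 0"]
      W_norm_le[OF a R] W_norm_le[OF b R] R by (simp add: bmult_zero)
  show "cmod (bmult a b None) \<le> R * R" using one_le_power[OF R, of 2] by (simp add: bmult_def power2_eq_square)
qed (use R in simp)

lemma binv_Cw:
  assumes R: "1 \<le> R" and RN: "8 * R < 2 ^ (N - k)" and a: "a \<in> W k R"
  shows "binv a \<in> Cw N"
proof (rule Cw_wnorm_le_of_tree_bound(1)[OF R RN, of R])
  have zero: "cmod ((\<lambda>_. 0::complex) x) \<le> R * (2 ^ k) ^ nverts0 x" for x using R by simp
  show "cmod (binv a (Some \<tau>))
      \<le> 2 ^ nverts \<tau> * (real (nverts \<tau> + 1) * R * R ^ (nverts \<tau> + 1) * (2 ^ k) ^ nverts \<tau>)" for \<tau>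
    using norm_binv_diff_le[OF R _ _ zero W_norm_le[OF a R], where \<tau>=\<tau> and d=R]
      W_norm_le[OF a R] R by (simp add: binv_zero)
  show "cmod (binv a None) \<le> R * R" using one_le_power[OF R, of 2] by (simp add: binv_def power2_eq_square)
qed (use R in simp)

lemma wnorm_bmult_diff_le:
  assumes R: "1 \<le> R" and RN: "8 * R < 2 ^ (N - k)"
    and W: "a \<in> W k R" "a' \<in> W k R" "b \<in> W k R" "b' \<in> W k R"
  shows "wnorm N (\<lambda>x. bmult a' b' x - bmult a b x)
    \<le> max (wnorm k (\<lambda>x. a' x - a x)) (wnorm k (\<lambda>x. b' x - b x)) * R"
proof (rule Cw_wnorm_le_of_tree_bound(2)[OF R RN])
  define D where "D = max (wnorm k (\<lambda>x. a' x - a x)) (wnorm k (\<lambda>x. b' x - b x))"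
  show D0: "0 \<le> D" using W_wnorm_diff_nonneg[OF W(1,2)] by (simp add: D_def)
  have "cmod (a' x - a x) \<le> D * (2 ^ k) ^ nverts0 x" "cmod (b' x - b x) \<le> D * (2 ^ k) ^ nverts0 x" for x
    using W_norm_diff_le[OF W(1,2), of x] W_norm_diff_le[OF W(3,4), of x]
    by (auto simp: D_def intro: order_trans mult_right_mono)
  then show "cmod (bmult a' b' (Some \<tau>) - bmult a b (Some \<tau>))
      \<le> 2 ^ nverts \<tau> * (real (nverts \<tau> + 1) * D * R ^ (nverts \<tau> + 1) * (2 ^ k) ^ nverts \<tau>)" for \<tau>
    by (intro norm_bmult_diff_le[OF R _ D0 W_norm_le[OF W(1) R] W_norm_le[OF W(2) R] W_norm_le[OF W(4) R]])
      auto
  show "cmod (bmult a' b' None - bmult a b None) \<le> D * R" using D0 R by (simp add: bmult_def)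
qed

lemma wnorm_binv_diff_le:
  assumes R: "1 \<le> R" and RN: "8 * R < 2 ^ (N - k)" and W: "a \<in> W k R" "a' \<in> W k R"
  shows "wnorm N (\<lambda>x. binv a' x - binv a x) \<le> wnorm k (\<lambda>x. a' x - a x) * R"
proof (rule Cw_wnorm_le_of_tree_bound(2)[OF R RN])
  define D where "D = wnorm k (\<lambda>x. a' x - a x)"
  show D0: "0 \<le> D" using W_wnorm_diff_nonneg[OF W] by (simp add: D_def)
  show "cmod (binv a' (Some \<tau>) - binv a (Some \<tau>))
      \<le> 2 ^ nverts \<tau> * (real (nverts \<tau> + 1) * D * R ^ (nverts \<tau> + 1) * (2 ^ k) ^ nverts \<tau>)" for \<tau>
    by (intro norm_binv_diff_le[OF R _ D0 W_norm_le[OF W(1) R] W_norm_le[OF W(2) R]])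
      (auto simp: D_def W_norm_diff_le[OF W])
  show "cmod (binv a' None - binv a None) \<le> D * R" using D0 R by (simp add: binv_def)
qed

theorem proposition2p3:
  fixes k N :: nat and R :: real
  assumes "R \<ge> 1" and "8 * R < 2 ^ (N - k)"
  shows "(\<forall>a\<in>W k R. \<forall>b\<in>W k R. bmult a b \<in> Cw N \<and> binv a \<in> Cw N)
    \<and> (\<forall>a\<in>W k R. \<forall>b\<in>W k R. \<forall>\<epsilon>>0. \<exists>\<delta>>0. \<forall>a'\<in>W k R. \<forall>b'\<in>W k R.
          wnorm k (\<lambda>x. a' x - a x) < \<delta> \<and> wnorm k (\<lambda>x. b' x - b x) < \<delta> \<longrightarrow>
          wnorm N (\<lambda>x. bmult a' b' x - bmult a b x) < \<epsilon>)
    \<and> (\<forall>a\<in>W k R. \<forall>\<epsilon>>0. \<exists>\<delta>>0. \<forall>a'\<in>W k R.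
          wnorm k (\<lambda>x. a' x - a x) < \<delta> \<longrightarrow>
          wnorm N (\<lambda>x. binv a' x - binv a x) < \<epsilon>)"
proof (intro conjI ballI allI impI)
  have R0: "0 < R" using assms(1) by simp
  show "bmult a b \<in> Cw N" "binv a \<in> Cw N" if "a \<in> W k R" "b \<in> W k R" for a b
    using bmult_Cw[OF assms] binv_Cw[OF assms] that by auto
  show "\<exists>\<delta>>0. \<forall>a'\<in>W k R. \<forall>b'\<in>W k R.
          wnorm k (\<lambda>x. a' x - a x) < \<delta> \<and> wnorm k (\<lambda>x. b' x - b x) < \<delta> \<longrightarrow>
          wnorm N (\<lambda>x. bmult a' b' x - bmult a b x) < \<epsilon>"
    if "a \<in> W k R" "b \<in> W k R" "\<epsilon> > 0" for a b \<epsilon>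
  proof (intro exI[of _ "\<epsilon> / R"] conjI ballI impI)
    fix a' b' assume "a' \<in> W k R" "b' \<in> W k R"
      and "wnorm k (\<lambda>x. a' x - a x) < \<epsilon> / R \<and> wnorm k (\<lambda>x. b' x - b x) < \<epsilon> / R"
    then have "max (wnorm k (\<lambda>x. a' x - a x)) (wnorm k (\<lambda>x. b' x - b x)) * R < \<epsilon>"
      using R0 by (simp add: field_simps max_def)
    then show "wnorm N (\<lambda>x. bmult a' b' x - bmult a b x) < \<epsilon>"
      using wnorm_bmult_diff_le[OF assms that(1) \<open>a' \<in> W k R\<close> that(2) \<open>b' \<in> W k R\<close>] by linarith
  qed (use that R0 in simp)
  show "\<exists>\<delta>>0. \<forall>a'\<in>W k R. wnorm k (\<lambda>x. a' x - a x) < \<delta> \<longrightarrow>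
          wnorm N (\<lambda>x. binv a' x - binv a x) < \<epsilon>"
    if "a \<in> W k R" "\<epsilon> > 0" for a \<epsilon>
  proof (intro exI[of _ "\<epsilon> / R"] conjI ballI impI)
    fix a' assume "a' \<in> W k R" and "wnorm k (\<lambda>x. a' x - a x) < \<epsilon> / R"
    then have "wnorm k (\<lambda>x. a' x - a x) * R < \<epsilon>" using R0 by (simp add: field_simps)
    then show "wnorm N (\<lambda>x. binv a' x - binv a x) < \<epsilon>"
      using wnorm_binv_diff_le[OF assms that(1) \<open>a' \<in> W k R\<close>] by linarith
  qed (use that R0 in simp)
qed

end
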